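(* Let $q\ge1$ and consider an instance in $q$-dimensional Euclidean space (demand nodes and FCs are points $p\in\mathbb R^q$, $\ell_{ij}=\|p_i-p_j\|_2$) with $D_i=1$ for all $i$ and $C_j=1$ for all $j$, in which all demand–FC distances are positive, and let $\rho=\max_{i,j}\ell_{ij}/\min_{i,j}\ell_{ij}$. Then there is a regionalized solution using at most $(2+\lceil\sqrt q\rceil)^q(\lfloor\log_2\rho\rfloor+1)$ regions whose total delay is at most $(4\sqrt q+2)$ times the cost of a minimum cost assignment, and hence at most $(4\sqrt q+2)$ times the minimum delay of any regionalized solution.
   Context: An instance consists of finite sets $\mathcal D$ (demand nodes) and $\mathcal F$ (FCs), finite nonnegative travel times $\ell_{ij}$, demands $D_i\ge0$ and capacities $C_j\ge0$ with $\sum_iD_i\le\sum_jC_j$. An assignment is $x\in\mathbb R_{\ge0}^{\mathcal D\times\mathcal F}$ with $\sum_jx_{ij}=D_i$ for all $i$ and $\sum_ix_{ij}\le C_j$ for all $j$; its cost is $\sum_{ij}\ell_{ij}x_{ij}$. An equilibrium solution is a pair $(x,\beta)$ with $x$ an assignment and $\beta\in\mathbb R^{\mathcal F}_{\ge0}$ such that $x_{ij}>0$ only if $j\in\arg\min_{j'}(\ell_{ij'}+\beta_{j'})$, and $\beta_j=0$ whenever $\sum_ix_{ij}<C_j$; its delay is $\sum_iD_i\delta_i$ with $\delta_i=\min_j(\ell_{ij}+\beta_j)$. An $r$-regionalized solution consists of partitions $\mathcal D=\mathcal D_1\sqcup\dots\sqcup\mathcal D_r$, $\mathcal F=\mathcal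 F_1\sqcup\dots\sqcup\mathcal F_r$ (parts may be empty) with $\sum_{i\in\mathcal D_s}D_i\le\sum_{j\in\mathcal F_s}C_j$ for each $s$, together with an equilibrium solution of each sub-instance $(\mathcal D_s,\mathcal F_s)$; its delay is the sum of the delays of these $r$ equilibrium solutions. *)

theory Defs
  imports "HOL-Analysis.Analysis"
begin

text \<open>Generic instance data: demand nodes DD, FCs FF, travel times l, demands dem,
  capacities cap.  Assignments are functions x i j, only relevant on DD x FF.\<close>

definition is_assignment ::
  "'d set \<Rightarrow> 'f set \<Rightarrow> ('d \<Rightarrow> real) \<Rightarrow> ('f \<Rightarrow> real) \<Rightarrow> ('d \<Rightarrow> 'f \<Rightarrow> real) \<Rightarrow> bool" where
  "is_assignment DD FF dem cap x \<longleftrightarrow>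
     (\<forall>i\<in>DD. \<forall>j\<in>FF. x i j \<ge> 0) \<and>
     (\<forall>i\<in>DD. (\<Sum>j\<in>FF. x i j) = dem i) \<and>
     (\<forall>j\<in>FF. (\<Sum>i\<in>DD. x i j) \<le> cap j)"

definition assignment_cost ::
  "'d set \<Rightarrow> 'f set \<Rightarrow> ('d \<Rightarrow> 'f \<Rightarrow> real) \<Rightarrow> ('d \<Rightarrow> 'f \<Rightarrow> real) \<Rightarrow> real" where
  "assignment_cost DD FF l x = (\<Sum>i\<in>DD. \<Sum>j\<in>FF. l i j * x i j)"

definition is_equilibrium ::
  "'d set \<Rightarrow> 'f set \<Rightarrow> ('d \<Rightarrow> 'f \<Rightarrow> real) \<Rightarrow> ('d \<Rightarrow> real) \<Rightarrow> ('f \<Rightarrow> real)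
    \<Rightarrow> ('d \<Rightarrow> 'f \<Rightarrow> real) \<Rightarrow> ('f \<Rightarrow> real) \<Rightarrow> bool" where
  "is_equilibrium DD FF l dem cap x \<beta> \<longleftrightarrow>
     is_assignment DD FF dem cap x \<and>
     (\<forall>j\<in>FF. \<beta> j \<ge> 0) \<and>
     (\<forall>i\<in>DD. \<forall>j\<in>FF. x i j > 0 \<longrightarrow> (\<forall>j'\<in>FF. l i j + \<beta> j \<le> l i j' + \<beta> j')) \<and>
     (\<forall>j\<in>FF. (\<Sum>i\<in>DD. x i j) < cap j \<longrightarrow> \<beta> j = 0)"

definition eq_delay ::
  "'d set \<Rightarrow> 'f set \<Rightarrow> ('d \<Rightarrow> 'f \<Rightarrow> real) \<Rightarrow> ('d \<Rightarrow> real) \<Rightarrow> ('f \<Rightarrow> real) \<Rightarrow> real" where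
  "eq_delay DD FF l dem \<beta> = (\<Sum>i\<in>DD. dem i * Min ((\<lambda>j. l i j + \<beta> j) ` FF))"

definition is_regionalized ::
  "'d set \<Rightarrow> 'f set \<Rightarrow> ('d \<Rightarrow> 'f \<Rightarrow> real) \<Rightarrow> ('d \<Rightarrow> real) \<Rightarrow> ('f \<Rightarrow> real) \<Rightarrow> nat
    \<Rightarrow> (nat \<Rightarrow> 'd set) \<Rightarrow> (nat \<Rightarrow> 'f set) \<Rightarrow> (nat \<Rightarrow> 'd \<Rightarrow> 'f \<Rightarrow> real) \<Rightarrow> (nat \<Rightarrow> 'f \<Rightarrow> real) \<Rightarrow> bool" where
  "is_regionalized DD FF l dem cap r DP FP x \<beta> \<longleftrightarrow>
     (\<Union>s<r. DP s) = DD \<and> (\<forall>s<r. \<forall>t<r. s \<noteq> t \<longrightarrow> DP s \<inter> DP t = {}) \<and>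
     (\<Union>s<r. FP s) = FF \<and> (\<forall>s<r. \<forall>t<r. s \<noteq> t \<longrightarrow> FP s \<inter> FP t = {}) \<and>
     (\<forall>s<r. (\<Sum>i\<in>DP s. dem i) \<le> (\<Sum>j\<in>FP s. cap j)) \<and>
     (\<forall>s<r. is_equilibrium (DP s) (FP s) l dem cap (x s) (\<beta> s))"

definition regionalized_delay ::
  "'d set \<Rightarrow> 'f set \<Rightarrow> ('d \<Rightarrow> 'f \<Rightarrow> real) \<Rightarrow> ('d \<Rightarrow> real) \<Rightarrow> nat
    \<Rightarrow> (nat \<Rightarrow> 'd set) \<Rightarrow> (nat \<Rightarrow> 'f set) \<Rightarrow> (nat \<Rightarrow> 'f \<Rightarrow> real) \<Rightarrow> real" where
  "regionalized_delay DD FF l dem r DP FP \<beta> = (\<Sum>s<r. eq_delay (DP s) (FP s) l dem (\<beta> s))"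

end

theory Submission
  imports Defs "HOL-Combinatorics.Cycles"
begin

text \<open>Fix a minimum-cost matching \<open>m\<close> of the demand nodes into the FCs. Shortest-path
  potentials in its exchange graph, which has no negative cycle, are dual to it, so its cost
  bounds the cost of every fractional assignment and hence the delay of every regionalized
  solution. Group the demand nodes by the dyadic scale \<open>k\<close> of their matching distance and,
  below the top scale, by the colour of their cell in a grid of side \<open>4 * 2 ^ k * L\<close>, the cells
  being coloured periodically with \<open>(2 + \<lceil>sqrt q\<rceil>) ^ q\<close> colours; the top scale forms one more
  region and the unmatched FCs a last one. Inside a region, nodes in a common cell are close,
  while distinct cells of one colour are so far apart that gluing the potentials of the cells
  gives an equilibrium in which every node has delay at most \<open>4 * sqrt q + 2\<close> times its matching
  distance.\<close>

section \<open>Minimum-cost matchings and their dual potentials\<close>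

definition is_min_matching :: "'d set \<Rightarrow> 'f set \<Rightarrow> ('d \<Rightarrow> 'f \<Rightarrow> real) \<Rightarrow> ('d \<Rightarrow> 'f) \<Rightarrow> bool" where
  "is_min_matching DD FF l m \<longleftrightarrow> inj_on m DD \<and> m ` DD \<subseteq> FF \<and>
     (\<forall>\<mu>. inj_on \<mu> DD \<and> \<mu> ` DD \<subseteq> FF \<longrightarrow> (\<Sum>i\<in>DD. l i (m i)) \<le> (\<Sum>i\<in>DD. l i (\<mu> i)))"

lemma min_matching_exists:
  assumes "finite DD" "finite FF" "card DD \<le> card FF"
  obtains m where "is_min_matching DD FF l m"
proof -
  define cost where "cost \<mu> = (\<Sum>i\<in>DD. l i (\<mu> i))" for \<mu> :: "'a \<Rightarrow> 'b"
  define M where "M = {\<mu> \<in> DD \<rightarrow>\<^sub>E FF. inj_on \<mu> DD}"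
  have restrict_in: "restrict \<mu> DD \<in> M" if "inj_on \<mu> DD" "\<mu> ` DD \<subseteq> FF" for \<mu>
    using that unfolding M_def by (auto simp: inj_on_def)
  have "finite M"
    unfolding M_def by (rule finite_subset[of _ "DD \<rightarrow>\<^sub>E FF"]) (auto intro: finite_PiE assms)
  moreover obtain f where "inj_on f DD" "f ` DD \<subseteq> FF" using card_le_inj[OF assms] by blast
  then have "M \<noteq> {}" using restrict_in by blast
  ultimately have m: "arg_min_on cost M \<in> M" "\<And>\<mu>. \<mu> \<in> M \<Longrightarrow> cost (arg_min_on cost M) \<le> cost \<mu>"
    using arg_min_if_finite[of M cost] by (auto simp: not_less)
  have "cost (arg_min_on cost M) \<le> cost \<mu>" if "inj_on \<mu> DD" "\<mu> ` DD \<subseteq> FF" for \<mu>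
    using m(2)[OF restrict_in[OF that]] by (simp add: cost_def)
  moreover have "inj_on (arg_min_on cost M) DD" "arg_min_on cost M ` DD \<subseteq> FF"
    using m(1) by (auto simp: M_def)
  ultimately show thesis using that unfolding is_min_matching_def cost_def by blast
qed

lemma min_matching_subset:
  assumes "finite DD" "is_min_matching DD FF l m" "A \<subseteq> DD"
  shows "is_min_matching A (m ` A) l m"
  unfolding is_min_matching_def
proof (intro conjI allI impI subset_refl)
  have inj: "inj_on m DD" and opt: "\<And>\<mu>. inj_on \<mu> DD \<Longrightarrow> \<mu> ` DD \<subseteq> FF \<Longrightarrow>
      (\<Sum>i\<in>DD. l i (m i)) \<le> (\<Sum>i\<in>DD. l i (\<mu> i))" and "m ` DD \<subseteq> FF"
    using assms(2) by (auto simp: is_min_matching_def)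
  show "inj_on m A" using inj assms(3) by (rule inj_on_subset)
  fix \<mu> assume \<mu>: "inj_on \<mu> A \<and> \<mu> ` A \<subseteq> m ` A"
  define \<mu>' where "\<mu>' i = (if i \<in> A then \<mu> i else m i)" for i
  have "inj_on \<mu>' (A \<union> (DD - A))"
  proof (subst inj_on_Un, intro conjI)
    show "inj_on \<mu>' A" using \<mu> inj_on_cong[of A \<mu>' \<mu>] by (simp add: \<mu>'_def)
    show "inj_on \<mu>' (DD - A)" using inj_on_subset[OF inj] inj_on_cong[of "DD - A" \<mu>' m]
      by (simp add: \<mu>'_def)
    have "m ` A \<inter> m ` (DD - A) = {}" using inj assms(3) by (auto dest: inj_onD)
    moreover have "\<mu>' ` A \<subseteq> m ` A" "\<mu>' ` (DD - A) = m ` (DD - A)" using \<mu> by (auto simp: \<mu>'_def)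
    ultimately have "\<mu>' ` A \<inter> \<mu>' ` (DD - A) = {}" by blast
    moreover have "A - (DD - A) = A" "DD - A - A = DD - A" by auto
    ultimately show "\<mu>' ` (A - (DD - A)) \<inter> \<mu>' ` (DD - A - A) = {}" by simp
  qed
  moreover have "\<mu>' ` DD \<subseteq> FF"
    using \<mu> assms(3) \<open>m ` DD \<subseteq> FF\<close> unfolding \<mu>'_def by (smt (verit) image_subset_iff subset_iff)
  ultimately have "(\<Sum>i\<in>DD. l i (m i)) \<le> (\<Sum>i\<in>DD. l i (\<mu>' i))"
    using opt assms(3) by (simp add: Un_absorb1)
  moreover have "(\<Sum>i\<in>DD. g i) = (\<Sum>i\<in>DD - A. g i) + (\<Sum>i\<in>A. g i)" for g :: "'a \<Rightarrow> real"
    by (rule sum.subset_diff[OF assms(3,1)])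
  ultimately show "(\<Sum>i\<in>A. l i (m i)) \<le> (\<Sum>i\<in>A. l i (\<mu> i))" by (simp add: \<mu>'_def)
qed

fun path_weight :: "('a \<Rightarrow> 'a \<Rightarrow> real) \<Rightarrow> 'a list \<Rightarrow> real" where
  "path_weight w (a # b # p) = w a b + path_weight w (b # p)"
| "path_weight w _ = 0"

lemma path_weight_append:
  "path_weight w (xs @ y # ys) = path_weight w (xs @ [y]) + path_weight w (y # ys)"
proof (induction xs)
  case (Cons a xs)
  then show ?case by (cases xs) auto
qed simp

lemma path_weight_snoc:
  "xs \<noteq> [] \<Longrightarrow> path_weight w (xs @ [y]) = (\<Sum>(a, b) \<leftarrow> zip xs (tl xs @ [y]). w a b)"
proof (induction xs)
  case (Cons a xs)
  then show ?case by (cases xs) auto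
qed simp

lemma path_weight_cycle:
  assumes "distinct cs" "cs \<noteq> []"
  shows "path_weight w (cs @ [hd cs]) = (\<Sum>j\<in>set cs. w j (cycle_of_list cs j))"
proof -
  have "tl cs @ [hd cs] = map (cycle_of_list cs) cs"
    using cyclic_rotation[of cs 1] assms by (simp add: rotate1_hd_tl)
  then show ?thesis
    using assms by (simp add: path_weight_snoc zip_map2 zip_same_conv_map comp_def
        sum_list_distinct_conv_sum_set)
qed

text \<open>Arc weights of the exchange graph on the FCs: moving the demand node matched to \<open>a\<close> over
  to \<open>b\<close> changes the cost of the matching by \<open>exchange_cost A m l a b\<close>.\<close>

definition exchange_cost :: "'d set \<Rightarrow> ('d \<Rightarrow> 'f) \<Rightarrow> ('d \<Rightarrow> 'f \<Rightarrow> real) \<Rightarrow> 'f \<Rightarrow> 'f \<Rightarrow> real" where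
  "exchange_cost A m l a b = l (inv_into A m a) b - l (inv_into A m a) a"

lemma min_matching_cycle_nonneg:
  assumes "finite A" "is_min_matching A F l m" "m ` A = F" "distinct cs" "set cs \<subseteq> F"
  shows "0 \<le> (\<Sum>j\<in>set cs. exchange_cost A m l j (cycle_of_list cs j))"
proof -
  let ?\<sigma> = "cycle_of_list cs" and ?w = "exchange_cost A m l"
  have inj: "inj_on m A" using assms(2) by (simp add: is_min_matching_def)
  have \<sigma>: "?\<sigma> permutes F" using cycle_permutes assms(5) by (rule permutes_subset)
  have "inj_on (?\<sigma> \<circ> m) A" by (rule comp_inj_on[OF inj permutes_inj_on[OF \<sigma>]])
  moreover have "(?\<sigma> \<circ> m) ` A = F" by (metis assms(3) image_comp permutes_image[OF \<sigma>])
  ultimately have "(\<Sum>i\<in>A. l i (m i)) \<le> (\<Sum>i\<in>A. l i (?\<sigma> (m i)))"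
    using assms(2) unfolding is_min_matching_def by fastforce
  also have "(\<Sum>i\<in>A. l i (?\<sigma> (m i))) = (\<Sum>i\<in>A. l i (m i)) + (\<Sum>i\<in>A. ?w (m i) (?\<sigma> (m i)))"
    using inj by (simp add: exchange_cost_def sum.distrib[symmetric])
  also have "(\<Sum>i\<in>A. ?w (m i) (?\<sigma> (m i))) = (\<Sum>j\<in>F. ?w j (?\<sigma> j))"
    using sum.reindex[OF inj, of "\<lambda>j. ?w j (?\<sigma> j)"] assms(3) by simp
  also have "\<dots> = (\<Sum>j\<in>set cs. ?w j (?\<sigma> j))"
    using assms(1,3,5) by (intro sum.mono_neutral_right) (auto simp: exchange_cost_def id_outside_supp)
  finally show ?thesis by simp
qed

definition simple_paths :: "'a set \<Rightarrow> 'a \<Rightarrow> 'a list set" where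
  "simple_paths F j = {p. distinct p \<and> set p \<subseteq> F \<and> p \<noteq> [] \<and> hd p = j}"

lemma finite_simple_paths:
  assumes "finite F"
  shows "finite (simple_paths F j)"
  using finite_subset_distinct[OF assms] by (rule finite_subset[rotated]) (auto simp: simple_paths_def)

lemma shortest_simple_path_triangle:
  assumes "finite F" "a \<in> F" "b \<in> F"
    and no_negative_cycle: "\<And>cs. distinct cs \<Longrightarrow> cs \<noteq> [] \<Longrightarrow> set cs \<subseteq> F \<Longrightarrow> 0 \<le> path_weight w (cs @ [hd cs])"
  shows "Min (path_weight w ` simple_paths F a) \<le> w a b + Min (path_weight w ` simple_paths F b)"
proof -
  let ?d = "\<lambda>j. Min (path_weight w ` simple_paths F j)"
  have shortest: "?d j \<le> path_weight w p" if "p \<in> simple_paths F j" for j p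
    using finite_simple_paths[OF assms(1)] that by simp
  have "[b] \<in> simple_paths F b" using assms(3) by (simp add: simple_paths_def)
  then have "?d b \<in> path_weight w ` simple_paths F b"
    using finite_simple_paths[OF assms(1)] by (intro Min_in) auto
  then obtain p where p: "p \<in> simple_paths F b" "?d b = path_weight w p" by blast
  have p_distinct: "distinct p" and p_in: "set p \<subseteq> F" using p(1) by (auto simp: simple_paths_def)
  show ?thesis
  proof (cases "a \<in> set p")
    case False
    then have "a # p \<in> simple_paths F a" using p(1) assms(2) by (auto simp: simple_paths_def)
    moreover have "path_weight w (a # p) = w a b + path_weight w p"
      using p(1) by (cases p) (auto simp: simple_paths_def)
    ultimately show ?thesis using shortest p(2) by fastforce
  next
    case True
    txt \<open>The part of \<open>p\<close> before \<open>a\<close> closes the cycle \<open>a \<rightarrow> b \<rightarrow> \<dots> \<rightarrow> a\<close>.\<close>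
    then obtain as bs where split: "p = as @ a # bs" "a \<notin> set as" by (meson split_list_first)
    have "hd (as @ [a]) = b" using p(1) split by (cases as) (auto simp: simple_paths_def)
    have "0 \<le> path_weight w ((a # as) @ [a])"
      using no_negative_cycle[of "a # as"] p_distinct p_in split by simp
    also have "\<dots> = w a b + path_weight w (as @ [a])" using \<open>hd (as @ [a]) = b\<close> by (cases as) auto
    finally have "path_weight w (a # bs) \<le> w a b + path_weight w p"
      using path_weight_append[of w as a bs] split(1) by simp
    moreover have "a # bs \<in> simple_paths F a" using p_distinct p_in split by (auto simp: simple_paths_def)
    ultimately show ?thesis using shortest p(2) by fastforce
  qed
qed

lemma min_perfect_matching_potentials:
  assumes "finite A" "is_min_matching A F l m" "m ` A = F"
  obtains \<pi> where "\<And>i j. i \<in> A \<Longrightarrow> j \<in> F \<Longrightarrow> l i (m i) + \<pi> (m i) \<le> l i j + \<pi> j"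
proof -
  let ?w = "exchange_cost A m l"
  have "finite F" using assms(1,3) by blast
  have no_negative_cycle: "0 \<le> path_weight ?w (cs @ [hd cs])" if "distinct cs" "cs \<noteq> []" "set cs \<subseteq> F" for cs
    using min_matching_cycle_nonneg[OF assms that(1,3)] path_weight_cycle[OF that(1,2)] by simp
  define \<pi> where "\<pi> j = Min (path_weight ?w ` simple_paths F j)" for j
  show thesis
  proof (rule that)
    fix i j assume "i \<in> A" "j \<in> F"
    then have "m i \<in> F" "inv_into A m (m i) = i" using assms(2,3) by (auto simp: is_min_matching_def)
    then show "l i (m i) + \<pi> (m i) \<le> l i j + \<pi> j"
      using shortest_simple_path_triangle[OF \<open>finite F\<close> \<open>m i \<in> F\<close> \<open>j \<in> F\<close> no_negative_cycle]
      by (simp add: \<pi>_def exchange_cost_def)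
  qed
qed

lemma min_matching_potentials:
  fixes l :: "'d \<Rightarrow> 'f \<Rightarrow> real"
  assumes "finite DD" "finite FF" "is_min_matching DD FF l m"
  obtains \<beta> where "\<And>j. j \<in> FF \<Longrightarrow> 0 \<le> \<beta> j" "\<And>j. j \<in> FF - m ` DD \<Longrightarrow> \<beta> j = 0"
    "FF \<noteq> {} \<Longrightarrow> \<exists>j\<in>FF. \<beta> j = 0"
    "\<And>i j. i \<in> DD \<Longrightarrow> j \<in> FF \<Longrightarrow> l i (m i) + \<beta> (m i) \<le> l i j + \<beta> j"
proof -
  txt \<open>Each unmatched FC receives a dummy demand node \<open>Inr j\<close> with zero travel times,
    which makes the matching perfect.\<close>
  define D' where "D' = Inl ` DD \<union> Inr ` (FF - m ` DD)"
  define m' where "m' = case_sum m id"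
  define l' :: "'d + 'f \<Rightarrow> 'f \<Rightarrow> real" where "l' d j = case_sum (\<lambda>i. l i j) (\<lambda>_. 0) d" for d j
  have inj: "inj_on m DD" and im: "m ` DD \<subseteq> FF"
    and opt: "\<And>\<mu>. inj_on \<mu> DD \<Longrightarrow> \<mu> ` DD \<subseteq> FF \<Longrightarrow> (\<Sum>i\<in>DD. l i (m i)) \<le> (\<Sum>i\<in>DD. l i (\<mu> i))"
    using assms(3) by (auto simp: is_min_matching_def)
  have cost': "(\<Sum>d\<in>D'. l' d (g d)) = (\<Sum>i\<in>DD. l i (g (Inl i)))" for g
  proof -
    have "(\<Sum>d\<in>D'. l' d (g d)) = (\<Sum>d\<in>Inl ` DD. l' d (g d)) + (\<Sum>d\<in>Inr ` (FF - m ` DD). l' d (g d))"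
      unfolding D'_def using assms(1,2) by (intro sum.union_disjoint) auto
    then show ?thesis by (simp add: sum.reindex l'_def)
  qed
  have comp: "m' \<circ> Inl = m" "m' \<circ> Inr = id" by (simp_all add: m'_def fun_eq_iff)
  then have img: "m' ` Inl ` X = m ` X" "m' ` Inr ` Y = Y" for X Y by (simp_all add: image_comp)
  then have m'_onto: "m' ` D' = FF" unfolding D'_def image_Un using im by auto
  have "finite D'" using assms(1,2) by (simp add: D'_def)
  have "is_min_matching D' FF l' m'"
    unfolding is_min_matching_def
  proof (intro conjI allI impI)
    have "Inl ` DD - Inr ` (FF - m ` DD) = Inl ` DD" "Inr ` (FF - m ` DD) - Inl ` DD = Inr ` (FF - m ` DD)"
      by auto
    then show "inj_on m' D'"
      unfolding D'_def inj_on_Un using inj comp img by (simp add: inj_on_imageI)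
    show "m' ` D' \<subseteq> FF" using m'_onto by simp
    fix \<mu> assume \<mu>: "inj_on \<mu> D' \<and> \<mu> ` D' \<subseteq> FF"
    have sub: "Inl ` DD \<subseteq> D'" by (simp add: D'_def)
    have "inj_on (\<mu> \<circ> Inl) DD" by (rule comp_inj_on[OF inj_Inl inj_on_subset[OF conjunct1[OF \<mu>] sub]])
    moreover have "(\<mu> \<circ> Inl) ` DD \<subseteq> FF" using \<mu> sub by (metis image_comp image_mono order_trans)
    ultimately show "(\<Sum>d\<in>D'. l' d (m' d)) \<le> (\<Sum>d\<in>D'. l' d (\<mu> d))"
      using opt[of "\<mu> \<circ> Inl"] by (simp add: cost' m'_def)
  qed
  then obtain \<pi> where \<pi>: "\<And>d j. d \<in> D' \<Longrightarrow> j \<in> FF \<Longrightarrow> l' d (m' d) + \<pi> (m' d) \<le> l' d j + \<pi> j"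
    using min_perfect_matching_potentials[OF \<open>finite D'\<close> _ m'_onto] by metis
  define \<beta> where "\<beta> j = \<pi> j - Min (\<pi> ` FF)" for j
  have fin: "finite (\<pi> ` FF)" using assms(2) by simp
  show thesis
  proof
    show "0 \<le> \<beta> j" if "j \<in> FF" for j using that fin by (simp add: \<beta>_def)
    show "\<beta> j = 0" if j: "j \<in> FF - m ` DD" for j
    proof -
      have "Inr j \<in> D'" using j by (simp add: D'_def)
      then have "\<pi> j \<le> \<pi> j'" if "j' \<in> FF" for j' using \<pi>[of "Inr j" j'] that by (simp add: l'_def m'_def)
      then have "\<pi> j = Min (\<pi> ` FF)" using j fin by (intro antisym Min.boundedI Min_le) auto
      then show ?thesis by (simp add: \<beta>_def)
    qed
    show "\<exists>j\<in>FF. \<beta> j = 0" if "FF \<noteq> {}" using Min_in[OF fin] that by (force simp: \<beta>_def)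
    show "l i (m i) + \<beta> (m i) \<le> l i j + \<beta> j" if "i \<in> DD" "j \<in> FF" for i j
      using \<pi>[of "Inl i" j] that by (simp add: D'_def l'_def m'_def \<beta>_def)
  qed
qed

lemma min_matching_le_assignment_cost:
  assumes "finite DD" "finite FF" "is_min_matching DD FF l m"
    and "is_assignment DD FF (\<lambda>_. 1) (\<lambda>_. 1) y"
  shows "(\<Sum>i\<in>DD. l i (m i)) \<le> assignment_cost DD FF l y"
proof -
  obtain \<beta> where nonneg: "\<And>j. j \<in> FF \<Longrightarrow> 0 \<le> \<beta> j"
    and unmatched: "\<And>j. j \<in> FF - m ` DD \<Longrightarrow> \<beta> j = 0"
    and dual: "\<And>i j. i \<in> DD \<Longrightarrow> j \<in> FF \<Longrightarrow> l i (m i) + \<beta> (m i) \<le> l i j + \<beta> j"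
    by (rule min_matching_potentials[OF assms(1-3)]) blast
  have inj: "inj_on m DD" and im: "m ` DD \<subseteq> FF" using assms(3) by (auto simp: is_min_matching_def)
  have y_nonneg: "\<And>i j. i \<in> DD \<Longrightarrow> j \<in> FF \<Longrightarrow> 0 \<le> y i j"
    and y_row: "\<And>i. i \<in> DD \<Longrightarrow> (\<Sum>j\<in>FF. y i j) = 1"
    and y_col: "\<And>j. j \<in> FF \<Longrightarrow> (\<Sum>i\<in>DD. y i j) \<le> 1"
    using assms(4) by (auto simp: is_assignment_def)
  define \<delta> where "\<delta> i = l i (m i) + \<beta> (m i)" for i
  have "(\<Sum>i\<in>DD. \<beta> (m i)) = (\<Sum>j\<in>m ` DD. \<beta> j)" by (simp add: sum.reindex[OF inj])
  also have "\<dots> = (\<Sum>j\<in>FF. \<beta> j)" using unmatched by (intro sum.mono_neutral_left[OF assms(2) im]) auto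
  finally have "(\<Sum>i\<in>DD. l i (m i)) + (\<Sum>j\<in>FF. \<beta> j) = (\<Sum>i\<in>DD. \<delta> i)"
    by (simp add: \<delta>_def sum.distrib)
  also have "\<dots> = (\<Sum>i\<in>DD. \<Sum>j\<in>FF. \<delta> i * y i j)" using y_row by (simp add: sum_distrib_left[symmetric])
  also have "\<dots> \<le> (\<Sum>i\<in>DD. \<Sum>j\<in>FF. (l i j + \<beta> j) * y i j)"
    using dual y_nonneg by (intro sum_mono mult_right_mono) (auto simp: \<delta>_def)
  also have "\<dots> = assignment_cost DD FF l y + (\<Sum>i\<in>DD. \<Sum>j\<in>FF. \<beta> j * y i j)"
    by (simp add: assignment_cost_def distrib_right sum.distrib)
  also have "(\<Sum>i\<in>DD. \<Sum>j\<in>FF. \<beta> j * y i j) = (\<Sum>j\<in>FF. \<beta> j * (\<Sum>i\<in>DD. y i j))"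
    unfolding sum_distrib_left by (rule sum.swap)
  also have "\<dots> \<le> (\<Sum>j\<in>FF. \<beta> j)" using nonneg y_col by (intro sum_mono) (simp add: mult_left_le)
  finally show ?thesis by simp
qed

section \<open>Equilibria and regionalized solutions\<close>

lemma assignment_cost_le_eq_delay:
  assumes "is_equilibrium S T l dem cap x \<beta>" "finite T"
  shows "assignment_cost S T l x \<le> eq_delay S T l dem \<beta>"
  unfolding assignment_cost_def eq_delay_def
proof (rule sum_mono)
  fix i assume i: "i \<in> S"
  let ?\<delta> = "Min ((\<lambda>j. l i j + \<beta> j) ` T)"
  have x_nonneg: "\<And>j. j \<in> T \<Longrightarrow> 0 \<le> x i j" and x_row: "(\<Sum>j\<in>T. x i j) = dem i"
    and \<beta>_nonneg: "\<And>j. j \<in> T \<Longrightarrow> 0 \<le> \<beta> j"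
    and used: "\<And>j j'. j \<in> T \<Longrightarrow> 0 < x i j \<Longrightarrow> j' \<in> T \<Longrightarrow> l i j + \<beta> j \<le> l i j' + \<beta> j'"
    using assms(1) i by (auto simp: is_equilibrium_def is_assignment_def)
  have on_support: "x i j * (l i j + \<beta> j) = x i j * ?\<delta>" if j: "j \<in> T" for j
  proof (cases "x i j = 0")
    case False
    then have "0 < x i j" using x_nonneg[OF j] by simp
    then have "l i j + \<beta> j = ?\<delta>" using j used assms(2) by (intro antisym Min.boundedI Min_le) auto
    then show ?thesis by simp
  qed simp
  have "(\<Sum>j\<in>T. l i j * x i j) \<le> (\<Sum>j\<in>T. x i j * (l i j + \<beta> j))"
    using x_nonneg \<beta>_nonneg by (intro sum_mono) (simp add: algebra_simps)
  also have "\<dots> = (\<Sum>j\<in>T. x i j * ?\<delta>)" using on_support by (rule sum.cong[OF refl])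
  also have "\<dots> = dem i * ?\<delta>" using x_row by (simp add: sum_distrib_right[symmetric])
  finally show "(\<Sum>j\<in>T. l i j * x i j) \<le> dem i * ?\<delta>" .
qed

lemma sum_if_mem_subset:
  "finite A \<Longrightarrow> B \<subseteq> A \<Longrightarrow> (\<Sum>a\<in>A. if a \<in> B then g a else 0) = sum g B"
  by (metis Int_absorb1 sum.inter_restrict)

lemma sum_if_mem_disjoint_family:
  fixes r :: nat
  assumes "\<forall>s<r. \<forall>t<r. s \<noteq> t \<longrightarrow> P s \<inter> P t = {}" "s0 < r" "a \<in> P s0"
  shows "(\<Sum>s<r. if a \<in> P s then c else 0) = c"
proof -
  have "(\<Sum>s<r. if a \<in> P s then c else 0) = (\<Sum>s<r. if s = s0 then c else 0)"
    using assms by (intro sum.cong) auto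
  also have "\<dots> = c" using assms(2) by (subst sum.delta) simp_all
  finally show ?thesis .
qed

definition glued_assignment ::
  "nat \<Rightarrow> (nat \<Rightarrow> 'd set) \<Rightarrow> (nat \<Rightarrow> 'f set) \<Rightarrow> (nat \<Rightarrow> 'd \<Rightarrow> 'f \<Rightarrow> real) \<Rightarrow> 'd \<Rightarrow> 'f \<Rightarrow> real" where
  "glued_assignment r DP FP x i j = (\<Sum>s<r. if i \<in> DP s \<and> j \<in> FP s then x s i j else 0)"

lemma glued_assignment_row_sum:
  assumes "finite FF" "\<forall>s<r. FP s \<subseteq> FF"
  shows "(\<Sum>j\<in>FF. glued_assignment r DP FP x i j) = (\<Sum>s<r. if i \<in> DP s then \<Sum>j\<in>FP s. x s i j else 0)"
proof -
  have "(\<Sum>j\<in>FF. glued_assignment r DP FP x i j)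
      = (\<Sum>s<r. if i \<in> DP s then \<Sum>j\<in>FF. if j \<in> FP s then x s i j else 0 else 0)"
    unfolding glued_assignment_def by (subst sum.swap) (intro sum.cong refl, simp)
  also have "\<dots> = (\<Sum>s<r. if i \<in> DP s then \<Sum>j\<in>FP s. x s i j else 0)"
    using assms by (intro sum.cong refl) (simp add: sum_if_mem_subset)
  finally show ?thesis .
qed

lemma glued_assignment_column_sum:
  assumes "finite DD" "\<forall>s<r. DP s \<subseteq> DD"
  shows "(\<Sum>i\<in>DD. glued_assignment r DP FP x i j) = (\<Sum>s<r. if j \<in> FP s then \<Sum>i\<in>DP s. x s i j else 0)"
proof -
  have "(\<Sum>i\<in>DD. glued_assignment r DP FP x i j)
      = (\<Sum>s<r. \<Sum>i\<in>DD. if i \<in> DP s \<and> j \<in> FP s then x s i j else 0)"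
    unfolding glued_assignment_def by (rule sum.swap)
  also have "\<dots> = (\<Sum>s<r. if j \<in> FP s then \<Sum>i\<in>DP s. x s i j else 0)"
    using assms by (intro sum.cong refl) (simp add: sum_if_mem_subset conj_commute)
  finally show ?thesis .
qed

lemma assignment_cost_glued_assignment:
  assumes "finite DD" "finite FF" "\<forall>s<r. DP s \<subseteq> DD" "\<forall>s<r. FP s \<subseteq> FF"
  shows "assignment_cost DD FF l (glued_assignment r DP FP x)
    = (\<Sum>s<r. assignment_cost (DP s) (FP s) l (x s))"
proof -
  have "assignment_cost DD FF l (glued_assignment r DP FP x)
      = (\<Sum>i\<in>DD. \<Sum>j\<in>FF. glued_assignment r DP FP (\<lambda>s i j. l i j * x s i j) i j)"
    unfolding assignment_cost_def glued_assignment_def sum_distrib_left by (intro sum.cong refl) simp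
  also have "\<dots> = (\<Sum>i\<in>DD. \<Sum>s<r. if i \<in> DP s then \<Sum>j\<in>FP s. l i j * x s i j else 0)"
    by (intro sum.cong refl glued_assignment_row_sum[OF assms(2,4)])
  also have "\<dots> = (\<Sum>s<r. \<Sum>i\<in>DD. if i \<in> DP s then \<Sum>j\<in>FP s. l i j * x s i j else 0)"
    by (rule sum.swap)
  also have "\<dots> = (\<Sum>s<r. assignment_cost (DP s) (FP s) l (x s))"
    unfolding assignment_cost_def using assms(1,3) by (intro sum.cong[OF refl] sum_if_mem_subset) auto
  finally show ?thesis .
qed

lemma glued_assignment_is_assignment:
  assumes "finite DD" "finite FF" "is_regionalized DD FF l dem cap r DP FP x \<beta>"
  shows "is_assignment DD FF dem cap (glued_assignment r DP FP x)"
proof -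
  have D_cover: "(\<Union>s<r. DP s) = DD" and F_cover: "(\<Union>s<r. FP s) = FF"
    and D_disj: "\<forall>s<r. \<forall>t<r. s \<noteq> t \<longrightarrow> DP s \<inter> DP t = {}"
    and F_disj: "\<forall>s<r. \<forall>t<r. s \<noteq> t \<longrightarrow> FP s \<inter> FP t = {}"
    and eq: "\<And>s. s < r \<Longrightarrow> is_assignment (DP s) (FP s) dem cap (x s)"
    using assms(3) unfolding is_regionalized_def is_equilibrium_def by blast+
  have DP_sub: "\<forall>s<r. DP s \<subseteq> DD" and FP_sub: "\<forall>s<r. FP s \<subseteq> FF"
    using D_cover F_cover by auto
  show ?thesis
    unfolding is_assignment_def
  proof (intro conjI ballI)
    fix i j
    show "0 \<le> glued_assignment r DP FP x i j"
      unfolding glued_assignment_def using eq by (intro sum_nonneg) (auto simp: is_assignment_def)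
  next
    fix i assume "i \<in> DD"
    then obtain s0 where "s0 < r" "i \<in> DP s0" using D_cover by auto
    have "(\<Sum>j\<in>FF. glued_assignment r DP FP x i j)
        = (\<Sum>s<r. if i \<in> DP s then \<Sum>j\<in>FP s. x s i j else 0)"
      by (rule glued_assignment_row_sum[OF assms(2) FP_sub])
    also have "\<dots> = (\<Sum>s<r. if i \<in> DP s then dem i else 0)"
      using eq by (intro sum.cong refl) (auto simp: is_assignment_def)
    also have "\<dots> = dem i" by (rule sum_if_mem_disjoint_family[OF D_disj \<open>s0 < r\<close> \<open>i \<in> DP s0\<close>])
    finally show "(\<Sum>j\<in>FF. glued_assignment r DP FP x i j) = dem i" .
  next
    fix j assume "j \<in> FF"
    then obtain s0 where "s0 < r" "j \<in> FP s0" using F_cover by auto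
    have "(\<Sum>i\<in>DD. glued_assignment r DP FP x i j) \<le> (\<Sum>s<r. if j \<in> FP s then cap j else 0)"
      unfolding glued_assignment_column_sum[OF assms(1) DP_sub]
      using eq by (intro sum_mono) (auto simp: is_assignment_def)
    also have "\<dots> = cap j" by (rule sum_if_mem_disjoint_family[OF F_disj \<open>s0 < r\<close> \<open>j \<in> FP s0\<close>])
    finally show "(\<Sum>i\<in>DD. glued_assignment r DP FP x i j) \<le> cap j" .
  qed
qed

lemma assignment_cost_glued_le_regionalized_delay:
  assumes "finite DD" "finite FF" "is_regionalized DD FF l dem cap r DP FP x \<beta>"
  shows "assignment_cost DD FF l (glued_assignment r DP FP x) \<le> regionalized_delay DD FF l dem r DP FP \<beta>"
proof -
  have cover: "(\<Union>s<r. DP s) = DD" "(\<Union>s<r. FP s) = FF"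
    and eq: "\<And>s. s < r \<Longrightarrow> is_equilibrium (DP s) (FP s) l dem cap (x s) (\<beta> s)"
    using assms(3) unfolding is_regionalized_def by blast+
  then have sub: "\<forall>s<r. DP s \<subseteq> DD" "\<forall>s<r. FP s \<subseteq> FF" by auto
  have "assignment_cost DD FF l (glued_assignment r DP FP x) = (\<Sum>s<r. assignment_cost (DP s) (FP s) l (x s))"
    using assms(1,2) sub by (rule assignment_cost_glued_assignment)
  also have "\<dots> \<le> regionalized_delay DD FF l dem r DP FP \<beta>"
    unfolding regionalized_delay_def using eq sub(2) assms(2)
    by (intro sum_mono assignment_cost_le_eq_delay) (auto intro: finite_subset)
  finally show ?thesis .
qed

lemma matching_equilibrium:
  assumes "finite S" "inj_on m S"
    and nonneg: "\<And>j. j \<in> m ` S \<Longrightarrow> 0 \<le> \<beta> j"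
    and dual: "\<And>i j. i \<in> S \<Longrightarrow> j \<in> m ` S \<Longrightarrow> l i (m i) + \<beta> (m i) \<le> l i j + \<beta> j"
  shows "is_equilibrium S (m ` S) l (\<lambda>_. 1) (\<lambda>_. 1) (\<lambda>i j. if j = m i then 1 else 0) \<beta>"
    and "eq_delay S (m ` S) l (\<lambda>_. 1) \<beta> = (\<Sum>i\<in>S. l i (m i) + \<beta> (m i))"
proof -
  have load: "(\<Sum>i\<in>S. if j = m i then 1 else 0) = (1::real)" if j: "j \<in> m ` S" for j
  proof -
    obtain i0 where i0: "i0 \<in> S" "j = m i0" using j by blast
    then have "(\<Sum>i\<in>S. if j = m i then 1 else 0) = (\<Sum>i\<in>S. if i = i0 then 1 else (0::real))"
      using assms(2) by (intro sum.cong) (auto dest: inj_onD)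
    then show ?thesis using assms(1) i0(1) by simp
  qed
  show "is_equilibrium S (m ` S) l (\<lambda>_. 1) (\<lambda>_. 1) (\<lambda>i j. if j = m i then 1 else 0) \<beta>"
    unfolding is_equilibrium_def is_assignment_def
    using assms(1) nonneg dual load by (auto split: if_splits)
  have "Min ((\<lambda>j. l i j + \<beta> j) ` m ` S) = l i (m i) + \<beta> (m i)" if "i \<in> S" for i
    using assms(1) dual that by (intro Min_eqI) auto
  then show "eq_delay S (m ` S) l (\<lambda>_. 1) \<beta> = (\<Sum>i\<in>S. l i (m i) + \<beta> (m i))"
    unfolding eq_delay_def by simp
qed

lemma clustered_matching_equilibrium:
  fixes l :: "'d \<Rightarrow> 'f \<Rightarrow> real" and cell :: "'d \<Rightarrow> 'c"
  assumes "finite S" "is_min_matching S (m ` S) l m"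
    and near: "\<And>i i'. i \<in> S \<Longrightarrow> i' \<in> S \<Longrightarrow> cell i = cell i' \<Longrightarrow> l i (m i') \<le> B i"
    and far: "\<And>i i'. i \<in> S \<Longrightarrow> i' \<in> S \<Longrightarrow> cell i \<noteq> cell i' \<Longrightarrow> B i \<le> l i (m i')"
  obtains x \<beta> where "is_equilibrium S (m ` S) l (\<lambda>_. 1) (\<lambda>_. 1) x \<beta>"
    "eq_delay S (m ` S) l (\<lambda>_. 1) \<beta> \<le> (\<Sum>i\<in>S. B i)"
proof -
  have inj: "inj_on m S" using assms(2) by (simp add: is_min_matching_def)
  define G where "G \<kappa> = {i \<in> S. cell i = \<kappa>}" for \<kappa>
  define cell_potential where "cell_potential \<kappa> \<pi> \<longleftrightarrow> (\<forall>j\<in>m ` G \<kappa>. 0 \<le> \<pi> j) \<and>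
      (G \<kappa> \<noteq> {} \<longrightarrow> (\<exists>j\<in>m ` G \<kappa>. \<pi> j = 0)) \<and>
      (\<forall>i\<in>G \<kappa>. \<forall>j\<in>m ` G \<kappa>. l i (m i) + \<pi> (m i) \<le> l i j + \<pi> j)" for \<kappa> and \<pi> :: "'f \<Rightarrow> real"
  have "\<exists>\<pi>. cell_potential \<kappa> \<pi>" for \<kappa>
  proof -
    have "G \<kappa> \<subseteq> S" by (auto simp: G_def)
    then have G: "finite (G \<kappa>)" "is_min_matching (G \<kappa>) (m ` G \<kappa>) l m"
      using assms(1) min_matching_subset[OF assms(1,2)] by (auto intro: finite_subset)
    obtain \<pi> where "\<And>j. j \<in> m ` G \<kappa> \<Longrightarrow> 0 \<le> \<pi> j" "m ` G \<kappa> \<noteq> {} \<Longrightarrow> \<exists>j\<in>m ` G \<kappa>. \<pi> j = 0"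
      "\<And>i j. i \<in> G \<kappa> \<Longrightarrow> j \<in> m ` G \<kappa> \<Longrightarrow> l i (m i) + \<pi> (m i) \<le> l i j + \<pi> j"
      by (rule min_matching_potentials[OF G(1) finite_imageI[OF G(1)] G(2)]) blast
    then show ?thesis unfolding cell_potential_def by blast
  qed
  then obtain \<pi> where \<pi>: "\<And>\<kappa>. cell_potential \<kappa> (\<pi> \<kappa>)" by metis
  txt \<open>Within a cell the equilibrium inequality is dual feasibility of the cell's potential; across
    cells it follows from \<open>l i (m i) + \<beta> (m i) \<le> B i \<le> l i j\<close>, using a zero of the potential
    in the cell of \<open>i\<close>.\<close>
  define \<beta> where "\<beta> j = \<pi> (cell (inv_into S m j)) j" for j
  have \<beta>_m: "\<beta> (m i) = \<pi> (cell i) (m i)" if "i \<in> S" for i using inj that by (simp add: \<beta>_def)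
  have in_cell: "i \<in> G (cell i)" if "i \<in> S" for i using that by (simp add: G_def)
  have nonneg: "0 \<le> \<beta> j" if "j \<in> m ` S" for j
    using that \<beta>_m \<pi> in_cell unfolding cell_potential_def by fastforce
  have within: "l i (m i) + \<beta> (m i) \<le> l i (m i') + \<beta> (m i')" if "i \<in> S" "i' \<in> G (cell i)" for i i'
    using \<pi>[of "cell i"] that in_cell \<beta>_m unfolding cell_potential_def G_def by auto
  have le_B: "l i (m i) + \<beta> (m i) \<le> B i" if i: "i \<in> S" for i
  proof -
    obtain i0 where i0: "i0 \<in> G (cell i)" "\<pi> (cell i) (m i0) = 0"
      using \<pi>[of "cell i"] in_cell[OF i] unfolding cell_potential_def by blast
    have "l i (m i) + \<beta> (m i) \<le> l i (m i0) + \<beta> (m i0)" using within[OF i i0(1)] .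
    also have "\<dots> = l i (m i0)" using i0 \<beta>_m by (simp add: G_def)
    also have "\<dots> \<le> B i" using near i i0(1) by (simp add: G_def)
    finally show ?thesis .
  qed
  have dual: "l i (m i) + \<beta> (m i) \<le> l i j + \<beta> j" if i: "i \<in> S" and j: "j \<in> m ` S" for i j
  proof -
    obtain i' where i': "i' \<in> S" "j = m i'" using j by blast
    show ?thesis
    proof (cases "cell i' = cell i")
      case True
      then show ?thesis using within[OF i, of i'] i' by (simp add: G_def)
    next
      case False
      then have "B i \<le> l i j" using far i i' by metis
      then show ?thesis using le_B[OF i] nonneg[OF j] by linarith
    qed
  qed
  have "eq_delay S (m ` S) l (\<lambda>_. 1) \<beta> = (\<Sum>i\<in>S. l i (m i) + \<beta> (m i))"
    by (rule matching_equilibrium(2)[where \<beta> = \<beta>, OF assms(1) inj nonneg dual])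
  also have "\<dots> \<le> (\<Sum>i\<in>S. B i)" using le_B by (rule sum_mono)
  finally show thesis using that matching_equilibrium(1)[where \<beta> = \<beta>, OF assms(1) inj nonneg dual] by blast
qed

lemma matching_regions_partition:
  fixes m :: "'d \<Rightarrow> 'f" and region :: "'d \<Rightarrow> nat"
  assumes "inj_on m DD" "m ` DD \<subseteq> FF" "finite FF" "region ` DD \<subseteq> {..<n}"
    and DP: "\<And>s. DP s = {i \<in> DD. region i = s}"
    and FP: "\<And>s. FP s = m ` DP s \<union> (if s = n then FF - m ` DD else {})"
  shows "(\<Union>s<Suc n. DP s) = DD" "(\<Union>s<Suc n. FP s) = FF"
    "\<forall>s<Suc n. \<forall>t<Suc n. s \<noteq> t \<longrightarrow> DP s \<inter> DP t = {}"
    "\<forall>s<Suc n. \<forall>t<Suc n. s \<noteq> t \<longrightarrow> FP s \<inter> FP t = {}"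
    "card (DP s) \<le> card (FP s)"
proof -
  show "(\<Union>s<Suc n. DP s) = DD" using assms(4) by (auto simp: DP)
  have "m ` DD \<subseteq> (\<Union>s<Suc n. FP s)"
  proof
    fix j assume "j \<in> m ` DD"
    then obtain i where "i \<in> DD" "j = m i" by blast
    then have "region i < Suc n" "j \<in> FP (region i)" using assms(4) by (auto simp: FP DP)
    then show "j \<in> (\<Union>s<Suc n. FP s)" by blast
  qed
  moreover have "FF - m ` DD \<subseteq> (\<Union>s<Suc n. FP s)"
    using UN_upper[of n "{..<Suc n}" FP] by (auto simp: FP)
  ultimately have "FF \<subseteq> (\<Union>s<Suc n. FP s)" by (simp add: Diff_subset_conv Un_absorb1)
  moreover have "(\<Union>s<Suc n. FP s) \<subseteq> FF" using assms(2) by (auto simp: FP DP split: if_splits)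
  ultimately show "(\<Union>s<Suc n. FP s) = FF" by (rule antisym[rotated])
  show "\<forall>s<Suc n. \<forall>t<Suc n. s \<noteq> t \<longrightarrow> DP s \<inter> DP t = {}" by (auto simp: DP)
  have "m ` DP s \<inter> m ` DP t = {}" if "s \<noteq> t" for s t
    using assms(1) that by (auto simp: DP dest: inj_onD)
  moreover have "i \<in> DD" if "i \<in> DP s" for i s using that by (simp add: DP)
  ultimately show "\<forall>s<Suc n. \<forall>t<Suc n. s \<noteq> t \<longrightarrow> FP s \<inter> FP t = {}" by (auto simp: FP)
  have "FP s \<subseteq> FF" using assms(2) by (auto simp: FP DP)
  then have "finite (FP s)" using assms(3) by (rule finite_subset)
  then have "card (m ` DP s) \<le> card (FP s)" by (rule card_mono) (simp add: FP)
  moreover have "card (m ` DP s) = card (DP s)"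
    using assms(1) by (intro card_image) (auto simp: DP intro: inj_on_subset)
  ultimately show "card (DP s) \<le> card (FP s)" by simp
qed

lemma regionalized_solution_from_clusters:
  fixes l :: "'d \<Rightarrow> 'f \<Rightarrow> real" and label :: "'d \<Rightarrow> 'k" and cell :: "'d \<Rightarrow> 'c"
  assumes "finite DD" "finite FF" "is_min_matching DD FF l m" "finite \<Lambda>" "label ` DD \<subseteq> \<Lambda>"
    and near: "\<And>i i'. i \<in> DD \<Longrightarrow> i' \<in> DD \<Longrightarrow> label i = label i' \<Longrightarrow> cell i = cell i' \<Longrightarrow>
      l i (m i') \<le> B i"
    and far: "\<And>i i'. i \<in> DD \<Longrightarrow> i' \<in> DD \<Longrightarrow> label i = label i' \<Longrightarrow> cell i \<noteq> cell i' \<Longrightarrow>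
      B i \<le> l i (m i')"
  obtains DP FP x \<beta> where "is_regionalized DD FF l (\<lambda>_. 1) (\<lambda>_. 1) (Suc (card \<Lambda>)) DP FP x \<beta>"
    "regionalized_delay DD FF l (\<lambda>_. 1) (Suc (card \<Lambda>)) DP FP \<beta> \<le> (\<Sum>i\<in>DD. B i)"
proof -
  define n where "n = card \<Lambda>"
  obtain enc where enc: "bij_betw enc \<Lambda> {..<n}"
    using ex_bij_betw_finite_nat[OF assms(4)] by (auto simp: n_def atLeast0LessThan)
  define region where "region i = enc (label i)" for i
  define DP where "DP s = {i \<in> DD. region i = s}" for s
  define FP where "FP s = m ` DP s \<union> (if s = n then FF - m ` DD else {})" for s
  have inj: "inj_on m DD" and im: "m ` DD \<subseteq> FF" using assms(3) by (auto simp: is_min_matching_def)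
  have region_lt: "region ` DD \<subseteq> {..<n}"
    using enc assms(5) by (auto simp: region_def bij_betw_def)
  have same_label: "label i = label i'" if "i \<in> DP s" "i' \<in> DP s" for i i' s
  proof -
    have "label i \<in> \<Lambda>" "label i' \<in> \<Lambda>" "enc (label i) = enc (label i')"
      using that assms(5) by (auto simp: DP_def region_def)
    then show ?thesis using enc by (auto simp: bij_betw_def dest: inj_onD)
  qed
  have DP_sub: "DP s \<subseteq> DD" for s by (auto simp: DP_def)
  have "\<exists>x \<beta>. is_equilibrium (DP s) (FP s) l (\<lambda>_. 1) (\<lambda>_. 1) x \<beta> \<and>
      eq_delay (DP s) (FP s) l (\<lambda>_. 1) \<beta> \<le> (\<Sum>i\<in>DP s. B i)" for s
  proof (cases "s = n")
    case True
    then have "DP s = {}" using region_lt by (auto simp: DP_def)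
    then show ?thesis
      by (intro exI[of _ "\<lambda>_ _. 0"] exI[of _ "\<lambda>_. 0"])
        (simp add: is_equilibrium_def is_assignment_def eq_delay_def)
  next
    case False
    have "finite (DP s)" using finite_subset[OF DP_sub assms(1)] .
    moreover have "is_min_matching (DP s) (m ` DP s) l m" using min_matching_subset[OF assms(1,3) DP_sub] .
    moreover have "l i (m i') \<le> B i" if "i \<in> DP s" "i' \<in> DP s" "cell i = cell i'" for i i'
      using near[of i i'] same_label[OF that(1,2)] DP_sub that by blast
    moreover have "B i \<le> l i (m i')" if "i \<in> DP s" "i' \<in> DP s" "cell i \<noteq> cell i'" for i i'
      using far[of i i'] same_label[OF that(1,2)] DP_sub that by blast
    ultimately obtain x \<beta> where "is_equilibrium (DP s) (m ` DP s) l (\<lambda>_. 1) (\<lambda>_. 1) x \<beta>"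
      "eq_delay (DP s) (m ` DP s) l (\<lambda>_. 1) \<beta> \<le> (\<Sum>i\<in>DP s. B i)"
      by (rule clustered_matching_equilibrium)
    moreover have "FP s = m ` DP s" using False by (simp add: FP_def)
    ultimately show ?thesis by auto
  qed
  then obtain x \<beta> where eq: "\<And>s. is_equilibrium (DP s) (FP s) l (\<lambda>_. 1) (\<lambda>_. 1) (x s) (\<beta> s)"
    and delay: "\<And>s. eq_delay (DP s) (FP s) l (\<lambda>_. 1) (\<beta> s) \<le> (\<Sum>i\<in>DP s. B i)"
    by metis
  note partition = matching_regions_partition[OF inj im assms(2) region_lt DP_def FP_def]
  have "is_regionalized DD FF l (\<lambda>_. 1) (\<lambda>_. 1) (Suc n) DP FP x \<beta>"
    unfolding is_regionalized_def using partition eq by simp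
  moreover have "regionalized_delay DD FF l (\<lambda>_. 1) (Suc n) DP FP \<beta> \<le> (\<Sum>s<Suc n. \<Sum>i\<in>DP s. B i)"
    unfolding regionalized_delay_def using delay by (rule sum_mono)
  moreover have "(\<Sum>s<Suc n. \<Sum>i\<in>DP s. B i) = (\<Sum>i\<in>DD. B i)"
    unfolding DP_def using region_lt assms(1) by (intro sum.group) auto
  ultimately show thesis using that n_def by simp
qed

section \<open>Regionalization in Euclidean space\<close>

definition grid_cell :: "real \<Rightarrow> real ^ 'n \<Rightarrow> 'n \<Rightarrow> int" where
  "grid_cell a x t = \<lfloor>x $ t / a\<rfloor>"

lemma dist_le_if_same_grid_cell:
  fixes x y :: "real ^ 'n"
  assumes "0 < a" "grid_cell a x = grid_cell a y"
  shows "dist x y \<le> sqrt CARD('n) * a"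
proof -
  have component: "dist (x $ t) (y $ t) \<le> a" for t
  proof -
    have "\<bar>x $ t / a - y $ t / a\<bar> < 1" using fun_cong[OF assms(2), of t] unfolding grid_cell_def by linarith
    then show ?thesis using assms(1) by (simp add: dist_real_def diff_divide_distrib[symmetric] abs_divide)
  qed
  have "dist x y \<le> L2_set (\<lambda>_ :: 'n. a) UNIV" unfolding dist_vec_def by (rule L2_set_mono) (auto simp: component)
  then show ?thesis using assms(1) by (simp add: L2_set_constant)
qed

lemma dist_gt_if_same_grid_colour:
  fixes x y :: "real ^ 'n" and a :: real and c :: int
  assumes "0 < a" "\<And>t. grid_cell a x t mod c = grid_cell a y t mod c" "grid_cell a x \<noteq> grid_cell a y"
  shows "(of_int c - 1) * a < dist x y"
proof -
  obtain t where t: "grid_cell a x t \<noteq> grid_cell a y t" using assms(3) by blast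
  have "c dvd grid_cell a x t - grid_cell a y t" using assms(2)[of t] by (simp add: mod_eq_dvd_iff)
  then have "\<bar>c\<bar> \<le> \<bar>grid_cell a x t - grid_cell a y t\<bar>" using t by (intro dvd_imp_le_int) auto
  then have "c - 1 < \<bar>x $ t / a - y $ t / a\<bar>" unfolding grid_cell_def by linarith
  also have "\<dots> = dist (x $ t) (y $ t) / a"
    using assms(1) by (simp add: dist_real_def diff_divide_distrib[symmetric] abs_divide)
  also have "\<dots> \<le> dist x y / a" using assms(1) by (intro divide_right_mono dist_vec_nth_le) simp
  finally show ?thesis using assms(1) by (simp add: field_simps)
qed

lemma dist_le_if_same_grid_cell_triangle:
  fixes x y z :: "real ^ 'n"
  assumes "0 < a" "grid_cell a x = grid_cell a y" "dist y z < h"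
  shows "dist x z \<le> sqrt CARD('n) * a + h"
  using dist_le_if_same_grid_cell[OF assms(1,2)] dist_triangle[of x z y] assms(3) by linarith

lemma dist_ge_if_same_grid_colour_triangle:
  fixes x y z :: "real ^ 'n" and c :: int
  assumes "0 < a" "\<And>t. grid_cell a x t mod c = grid_cell a y t mod c" "grid_cell a x \<noteq> grid_cell a y"
    and "sqrt CARD('n) + 2 \<le> of_int c" "a = 2 * h" "dist y z < h"
  shows "sqrt CARD('n) * a + h \<le> dist x z"
proof -
  have "(sqrt CARD('n) + 2) * a \<le> of_int c * a" using assms(1,4) by (intro mult_right_mono) simp_all
  then show ?thesis
    using dist_gt_if_same_grid_colour[OF assms(1-3)] dist_triangle2[of x y z] assms(5,6)
    unfolding left_diff_distrib distrib_right by linarith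
qed

lemma dyadic_scale:
  fixes d L :: real
  assumes "0 < L" "L \<le> d"
  shows "2 ^ nat \<lfloor>log 2 (d / L)\<rfloor> * L \<le> d" "d < 2 ^ (nat \<lfloor>log 2 (d / L)\<rfloor> + 1) * L"
proof -
  let ?k = "\<lfloor>log 2 (d / L)\<rfloor>"
  have "1 \<le> d / L" using assms by simp
  then have "0 \<le> ?k" by simp
  then have "2 powr ?k = 2 ^ nat ?k" by (metis of_nat_nat powr_realpow zero_less_numeral)
  moreover have "2 powr ?k \<le> d / L" "d / L < 2 powr ?k * 2"
    using floor_log_eq_powr_iff[of "d / L" 2 ?k] \<open>1 \<le> d / L\<close> by (auto simp: powr_add)
  ultimately show "2 ^ nat ?k * L \<le> d" "d < 2 ^ (nat ?k + 1) * L"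
    using assms(1) by (simp_all add: le_divide_eq divide_less_eq)
qed

lemma dyadic_scale_le:
  fixes d L :: real
  assumes "0 < L" "L \<le> d" "d < 2 ^ (K + 1) * L"
  shows "nat \<lfloor>log 2 (d / L)\<rfloor> \<le> K"
proof -
  have "(2::real) ^ nat \<lfloor>log 2 (d / L)\<rfloor> < 2 ^ (K + 1)"
    using dyadic_scale(1)[OF assms(1,2)] assms(1,3) by (smt (verit) mult_less_cancel_right)
  then have "nat \<lfloor>log 2 (d / L)\<rfloor> < K + 1" by (rule power_less_imp_less_exp[rotated]) simp
  then show ?thesis by simp
qed

lemma dyadic_range:
  fixes X :: "real set"
  assumes "finite X" "X \<noteq> {}" "\<And>x. x \<in> X \<Longrightarrow> 0 < x"
  defines "K \<equiv> nat \<lfloor>log 2 (Max X / Min X)\<rfloor>"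
  shows "0 < Min X" "\<And>x. x \<in> X \<Longrightarrow> Min X \<le> x \<and> x < 2 ^ (K + 1) * Min X"
    "\<lfloor>log 2 (Max X / Min X)\<rfloor> = int K"
proof -
  show "0 < Min X" using Min_in[OF assms(1,2)] assms(3) by blast
  have le: "Min X \<le> Max X" using Min_le[OF assms(1) Max_in[OF assms(1,2)]] .
  have "Max X < 2 ^ (K + 1) * Min X" unfolding K_def using \<open>0 < Min X\<close> le by (rule dyadic_scale(2))
  then show "Min X \<le> x \<and> x < 2 ^ (K + 1) * Min X" if "x \<in> X" for x
    using Min_le[OF assms(1) that] Max_ge[OF assms(1) that] by linarith
  have "1 \<le> Max X / Min X" using le \<open>0 < Min X\<close> by simp
  then show "\<lfloor>log 2 (Max X / Min X)\<rfloor> = int K" by (simp add: K_def)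
qed

definition colour_labels :: "nat \<Rightarrow> nat \<Rightarrow> (nat \<times> ('n \<Rightarrow> int)) option set" where
  "colour_labels K c = insert None (Some ` ({..<K} \<times> (UNIV \<rightarrow>\<^sub>E {0..<int c})))"

lemma finite_colour_labels: "finite (colour_labels K c :: (nat \<times> ('n::finite \<Rightarrow> int)) option set)"
  by (simp add: colour_labels_def finite_PiE)

lemma card_colour_labels:
  "card (colour_labels K c :: (nat \<times> ('n::finite \<Rightarrow> int)) option set) = K * c ^ CARD('n) + 1"
proof -
  have "card ((UNIV :: 'n set) \<rightarrow>\<^sub>E {0..<int c}) = c ^ CARD('n)" by (simp add: card_PiE)
  then show ?thesis by (simp add: colour_labels_def card_image card_cartesian_product finite_PiE)
qed

lemma euclidean_clustering:
  fixes DD FF :: "(real ^ 'n) set"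
  assumes "is_min_matching DD FF dist m" "0 < L"
    and scale: "\<And>i j. i \<in> DD \<Longrightarrow> j \<in> FF \<Longrightarrow> L \<le> dist i j \<and> dist i j < 2 ^ (K + 1) * L"
  obtains label :: "real ^ 'n \<Rightarrow> (nat \<times> ('n \<Rightarrow> int)) option" and cell :: "real ^ 'n \<Rightarrow> ('n \<Rightarrow> int) option"
    and B :: "real ^ 'n \<Rightarrow> real"
  where "label ` DD \<subseteq> colour_labels K (2 + nat \<lceil>sqrt CARD('n)\<rceil>)"
    "\<And>i i'. i \<in> DD \<Longrightarrow> i' \<in> DD \<Longrightarrow> label i = label i' \<Longrightarrow> cell i = cell i' \<Longrightarrow> dist i (m i') \<le> B i"
    "\<And>i i'. i \<in> DD \<Longrightarrow> i' \<in> DD \<Longrightarrow> label i = label i' \<Longrightarrow> cell i \<noteq> cell i' \<Longrightarrow> B i \<le> dist i (m i')"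
    "\<And>i. i \<in> DD \<Longrightarrow> B i \<le> (4 * sqrt CARD('n) + 2) * dist i (m i)"
proof -
  define q where "q = CARD('n)"
  define c where "c = 2 + nat \<lceil>sqrt q\<rceil>"
  txt \<open>Below the top scale \<open>K\<close>, a demand node is labelled by the dyadic scale \<open>k i\<close> of its
    matching distance and by the colour (cell index mod \<open>c\<close>) of its cell in the grid of side
    \<open>a i\<close>; distinct cells of one colour are more than \<open>(c - 1) * a i\<close> apart. All nodes of top
    scale share one label.\<close>
  define k where "k i = nat \<lfloor>log 2 (dist i (m i) / L)\<rfloor>" for i
  define h where "h i = 2 ^ (k i + 1) * L" for i
  define a where "a i = 2 * h i" for i
  define label where "label i = (if k i = K then None else Some (k i, \<lambda>t. grid_cell (a i) i t mod int c))" for i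
  define cell where "cell i = (if k i = K then None else Some (grid_cell (a i) i))" for i
  define B where "B i = (if k i = K then 2 ^ (K + 1) * L else sqrt q * a i + h i)" for i
  have m_in: "m i \<in> FF" if "i \<in> DD" for i using assms(1) that by (auto simp: is_min_matching_def)
  have k: "2 ^ k i * L \<le> dist i (m i)" "dist i (m i) < h i" "k i \<le> K" if "i \<in> DD" for i
  proof -
    note range = scale[OF that m_in[OF that]]
    show "2 ^ k i * L \<le> dist i (m i)" "dist i (m i) < h i" "k i \<le> K"
      using dyadic_scale[OF assms(2) conjunct1[OF range]] dyadic_scale_le[OF assms(2) conjunct1[OF range] conjunct2[OF range]]
      unfolding k_def h_def by auto
  qed
  have a_pos: "0 < a i" for i using assms(2) by (simp add: a_def h_def)
  have same_scale: "k i' = k i" "h i' = h i" "a i' = a i" if "label i = label i'" "k i \<noteq> K" for i i'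
    using that by (auto simp: label_def h_def a_def split: if_splits)
  show thesis
  proof
    have "label ` DD \<subseteq> colour_labels K c"
    proof
      fix y assume "y \<in> label ` DD"
      then obtain i where i: "i \<in> DD" "y = label i" by blast
      have "0 < c" by (simp add: c_def)
      then have "(\<lambda>t. grid_cell (a i) i t mod int c) \<in> UNIV \<rightarrow>\<^sub>E {0..<int c}" by (simp add: PiE_UNIV_domain)
      then show "y \<in> colour_labels K c" using i k(3)[OF i(1)] by (auto simp: label_def colour_labels_def)
    qed
    then show "label ` DD \<subseteq> colour_labels K (2 + nat \<lceil>sqrt CARD('n)\<rceil>)" by (simp add: c_def q_def)
  next
    fix i i' assume i: "i \<in> DD" and i': "i' \<in> DD" and "label i = label i'" and "cell i = cell i'"
    show "dist i (m i') \<le> B i"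
    proof (cases "k i = K")
      case True
      then show ?thesis using scale[OF i m_in[OF i']] by (simp add: B_def)
    next
      case False
      then have "grid_cell (a i) i = grid_cell (a i) i'"
        using \<open>cell i = cell i'\<close> same_scale[OF \<open>label i = label i'\<close>] by (auto simp: cell_def split: if_splits)
      then show ?thesis
        using dist_le_if_same_grid_cell_triangle[OF a_pos _ k(2)[OF i']] same_scale[OF \<open>label i = label i'\<close> False] False
        by (simp add: B_def q_def)
    qed
  next
    fix i i' assume i: "i \<in> DD" and i': "i' \<in> DD" and "label i = label i'" and "cell i \<noteq> cell i'"
    then have top: "k i \<noteq> K" by (auto simp: label_def cell_def split: if_splits)
    note same = same_scale[OF \<open>label i = label i'\<close> top]
    have colour: "grid_cell (a i) i t mod int c = grid_cell (a i) i' t mod int c" for t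
      using \<open>label i = label i'\<close> top same by (auto simp: label_def fun_eq_iff split: if_splits)
    have other: "grid_cell (a i) i \<noteq> grid_cell (a i) i'"
      using \<open>cell i \<noteq> cell i'\<close> top same by (auto simp: cell_def)
    have "sqrt CARD('n) + 2 \<le> of_int (int c)" unfolding c_def q_def by linarith
    moreover have "a i = 2 * h i'" using same by (simp add: a_def)
    ultimately show "B i \<le> dist i (m i')"
      using dist_ge_if_same_grid_colour_triangle[OF a_pos colour other _ _ k(2)[OF i']] top same
      by (simp add: B_def q_def)
  next
    fix i assume i: "i \<in> DD"
    have "B i \<le> (4 * sqrt q + 2) * (2 ^ k i * L)"
    proof (cases "k i = K")
      case True
      have "0 \<le> 4 * sqrt q * (2 ^ k i * L)" using assms(2) by simp
      then show ?thesis using True by (simp add: B_def algebra_simps)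
    qed (simp add: B_def a_def h_def algebra_simps)
    also have "\<dots> \<le> (4 * sqrt q + 2) * dist i (m i)" using k(1)[OF i] by (intro mult_left_mono) auto
    finally show "B i \<le> (4 * sqrt CARD('n) + 2) * dist i (m i)" by (simp add: q_def)
  qed
qed

lemma euclidean_regionalization:
  fixes DD FF :: "(real ^ 'n) set"
  assumes "finite DD" "finite FF" "is_min_matching DD FF dist m" "0 < L"
    and "\<And>i j. i \<in> DD \<Longrightarrow> j \<in> FF \<Longrightarrow> L \<le> dist i j \<and> dist i j < 2 ^ (K + 1) * L"
  obtains r DP FP x \<beta> where "is_regionalized DD FF dist (\<lambda>_. 1) (\<lambda>_. 1) r DP FP x \<beta>"
    "int r \<le> (2 + \<lceil>sqrt CARD('n)\<rceil>) ^ CARD('n) * (int K + 1)"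
    "regionalized_delay DD FF dist (\<lambda>_. 1) r DP FP \<beta> \<le> (4 * sqrt CARD('n) + 2) * (\<Sum>i\<in>DD. dist i (m i))"
proof (rule euclidean_clustering[OF assms(3-5)])
  fix label :: "real ^ 'n \<Rightarrow> (nat \<times> ('n \<Rightarrow> int)) option" and cell :: "real ^ 'n \<Rightarrow> ('n \<Rightarrow> int) option"
    and B :: "real ^ 'n \<Rightarrow> real"
  assume labels: "label ` DD \<subseteq> colour_labels K (2 + nat \<lceil>sqrt CARD('n)\<rceil>)"
    and near: "\<And>i i'. i \<in> DD \<Longrightarrow> i' \<in> DD \<Longrightarrow> label i = label i' \<Longrightarrow> cell i = cell i' \<Longrightarrow> dist i (m i') \<le> B i"
    and far: "\<And>i i'. i \<in> DD \<Longrightarrow> i' \<in> DD \<Longrightarrow> label i = label i' \<Longrightarrow> cell i \<noteq> cell i' \<Longrightarrow> B i \<le> dist i (m i')"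
    and B_le: "\<And>i. i \<in> DD \<Longrightarrow> B i \<le> (4 * sqrt CARD('n) + 2) * dist i (m i)"
  define c where "c = 2 + nat \<lceil>sqrt CARD('n)\<rceil>"
  let ?\<Lambda> = "colour_labels K c :: (nat \<times> ('n \<Rightarrow> int)) option set"
  obtain DP FP x \<beta> where R: "is_regionalized DD FF dist (\<lambda>_. 1) (\<lambda>_. 1) (Suc (card ?\<Lambda>)) DP FP x \<beta>"
    and delay: "regionalized_delay DD FF dist (\<lambda>_. 1) (Suc (card ?\<Lambda>)) DP FP \<beta> \<le> (\<Sum>i\<in>DD. B i)"
    by (rule regionalized_solution_from_clusters[OF assms(1-3) finite_colour_labels labels[folded c_def] near far])
  have "2 \<le> c" "0 < CARD('n)" by (simp_all add: c_def)
  then have "2 \<le> c ^ CARD('n)" using self_le_power[of c "CARD('n)"] by linarith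
  then have "Suc (card ?\<Lambda>) \<le> c ^ CARD('n) * (K + 1)"
    unfolding card_colour_labels by (simp add: algebra_simps)
  then have "int (Suc (card ?\<Lambda>)) \<le> int (c ^ CARD('n) * (K + 1))" by (rule of_nat_mono)
  then have "int (Suc (card ?\<Lambda>)) \<le> int c ^ CARD('n) * (int K + 1)" by (simp add: algebra_simps)
  moreover have "0 \<le> \<lceil>sqrt CARD('n)\<rceil>" using ceiling_mono[of 0 "sqrt CARD('n)"] by simp
  then have "int c = 2 + \<lceil>sqrt CARD('n)\<rceil>"
    unfolding c_def of_nat_add nat_0_le[OF \<open>0 \<le> \<lceil>sqrt CARD('n)\<rceil>\<close>] by simp
  moreover have "(\<Sum>i\<in>DD. B i) \<le> (4 * sqrt CARD('n) + 2) * (\<Sum>i\<in>DD. dist i (m i))"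
    unfolding sum_distrib_left using B_le by (rule sum_mono)
  ultimately show thesis using that R delay by fastforce
qed

theorem corollary5p3:
  fixes DD FF :: "(real ^ 'q) set"
  defines "l \<equiv> (\<lambda>(i::real ^ 'q) (j::real ^ 'q). dist i j)"
    and "dem \<equiv> (\<lambda>_::real ^ 'q. 1::real)"
    and "cap \<equiv> (\<lambda>_::real ^ 'q. 1::real)"
    and "q \<equiv> CARD('q)"
  assumes "finite DD" and "finite FF" and "DD \<noteq> {}"
    and "card DD \<le> card FF"
    and "\<forall>i\<in>DD. \<forall>j\<in>FF. l i j > 0"
  defines "\<rho> \<equiv> Max {l i j | i j. i \<in> DD \<and> j \<in> FF} / Min {l i j | i j. i \<in> DD \<and> j \<in> FF}"
  shows "\<exists>r DP FP x \<beta>.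
      is_regionalized DD FF l dem cap r DP FP x \<beta> \<and>
      int r \<le> (2 + \<lceil>sqrt (real q)\<rceil>) ^ q * (\<lfloor>log 2 \<rho>\<rfloor> + 1) \<and>
      (\<forall>y. is_assignment DD FF dem cap y \<longrightarrow>
         regionalized_delay DD FF l dem r DP FP \<beta> \<le> (4 * sqrt (real q) + 2) * assignment_cost DD FF l y) \<and>
      (\<forall>r' DP' FP' x' \<beta>'. is_regionalized DD FF l dem cap r' DP' FP' x' \<beta>' \<longrightarrow>
         regionalized_delay DD FF l dem r DP FP \<beta> \<le> (4 * sqrt (real q) + 2) * regionalized_delay DD FF l dem r' DP' FP' \<beta>')"
proof -
  have l: "l = dist" and unit: "dem = (\<lambda>_. 1)" "cap = (\<lambda>_. 1)"
    by (simp_all add: l_def dem_def cap_def fun_eq_iff)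
  obtain m where m: "is_min_matching DD FF dist m"
    by (rule min_matching_exists[OF \<open>finite DD\<close> \<open>finite FF\<close> \<open>card DD \<le> card FF\<close>])
  define X where "X = {l i j | i j. i \<in> DD \<and> j \<in> FF}"
  have "FF \<noteq> {}" using \<open>DD \<noteq> {}\<close> \<open>finite DD\<close> \<open>card DD \<le> card FF\<close> by auto
  have X: "finite X" "X \<noteq> {}" "\<And>x. x \<in> X \<Longrightarrow> 0 < x"
  proof -
    show "finite X" unfolding X_def using \<open>finite DD\<close> \<open>finite FF\<close> by (simp add: finite_image_set2)
    show "X \<noteq> {}" unfolding X_def using \<open>DD \<noteq> {}\<close> \<open>FF \<noteq> {}\<close> by blast
    show "0 < x" if "x \<in> X" for x using that \<open>\<forall>i\<in>DD. \<forall>j\<in>FF. l i j > 0\<close> unfolding X_def by blast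
  qed
  have "\<rho> = Max X / Min X" by (simp add: \<rho>_def X_def)
  note range = dyadic_range[OF X, folded this]
  have scale: "Min X \<le> dist i j \<and> dist i j < 2 ^ (nat \<lfloor>log 2 \<rho>\<rfloor> + 1) * Min X"
    if "i \<in> DD" "j \<in> FF" for i j
    using range(2)[of "dist i j"] that by (auto simp: X_def l)
  obtain r DP FP x \<beta> where R: "is_regionalized DD FF dist (\<lambda>_. 1) (\<lambda>_. 1) r DP FP x \<beta>"
    and count: "int r \<le> (2 + \<lceil>sqrt CARD('q)\<rceil>) ^ CARD('q) * (int (nat \<lfloor>log 2 \<rho>\<rfloor>) + 1)"
    and delay: "regionalized_delay DD FF dist (\<lambda>_. 1) r DP FP \<beta> \<le> (4 * sqrt CARD('q) + 2) * (\<Sum>i\<in>DD. dist i (m i))"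
    by (rule euclidean_regionalization[OF \<open>finite DD\<close> \<open>finite FF\<close> m range(1) scale])
  have "regionalized_delay DD FF dist (\<lambda>_. 1) r DP FP \<beta> \<le> (4 * sqrt CARD('q) + 2) * assignment_cost DD FF dist y"
    if "is_assignment DD FF (\<lambda>_. 1) (\<lambda>_. 1) y" for y
    using delay min_matching_le_assignment_cost[OF \<open>finite DD\<close> \<open>finite FF\<close> m that]
    by (smt (verit) mult_left_mono real_sqrt_ge_zero of_nat_0_le_iff)
  moreover note glued_assignment_is_assignment[OF \<open>finite DD\<close> \<open>finite FF\<close>]
    assignment_cost_glued_le_regionalized_delay[OF \<open>finite DD\<close> \<open>finite FF\<close>]
  ultimately show ?thesis
    unfolding l unit q_def using R count range(3)
    by (smt (verit) mult_left_mono real_sqrt_ge_zero of_nat_0_le_iff)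
qed

end
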